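(* Let $(R,\cdot,\alpha)$ be a non-unital hom-associative ring, let $\sigma,\delta\colon R\to R$ be left $R$-additive maps, extend $\alpha$ homogeneously to $R[X;\sigma,\delta]$, and suppose $R[X;\sigma,\delta]$ is hom-associative with this twisting map. Then for all $a,b,c\in R$: $$(a\cdot b)\cdot\delta(\alpha(c))=(a\cdot b)\cdot\alpha(\delta(c)),\qquad (a\cdot b)\cdot\sigma(\alpha(c))=(a\cdot b)\cdot\alpha(\sigma(c)),$$ $$\alpha(a)\cdot\delta(b\cdot c)=\alpha(a)\cdot\big(\delta(b)\cdot c+\sigma(b)\cdot\delta(c)\big),\qquad \alpha(a)\cdot\sigma(b\cdot c)=\alpha(a)\cdot\big(\sigma(b)\cdot\sigma(c)\big).$$
   Context: A hom-associative ring is a triple $(R,\cdot,\alpha)$ where $R$ is an abelian group with a biadditive (not necessarily associative or unital) multiplication $\cdot$ and an additive map $\alpha\colon R\to R$ satisfying $\alpha(a)\cdot(b\cdot c)=(a\cdot b)\cdot\alpha(c)$ for all $a,b,c$. $\mathbb{N}$ denotes the non-negative integers. A map $\beta\colon R\to R$ is left $R$-additive if $r\cdot\beta(s+t)=r\cdot(\beta(s)+\beta(t))$ for all $r,s,t\in R$. For $m\in\mathbb{N}$ and $0\le i\le m$, $\pi_i^m\colon R\to R$ denotes the sum of all $\binom{m}{i}$ compositions of $i$ copies of $\sigma$ and $m-i$ copies of $\delta$ in arbitrary order ($\pi_0^0=\mathrm{id}_R$), and $\pi_i^m:=0$ if $i<0$ or $i>m$. The non-unital, non-associative Ore extension $R[X;\sigma,\delta]$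 is the set of formal sums $\sum_{i\in\mathbb{N}}a_iX^i$ with $a_i\in R$, finitely many nonzero, with coefficientwise addition and the distributive multiplication determined by $aX^m\cdot bX^n=\sum_{i\in\mathbb{N}}(a\cdot\pi_i^m(b))X^{i+n}$. The homogeneous extension of $\alpha$ is $\alpha\left(\sum_ia_iX^i\right):=\sum_i\alpha(a_i)X^i$. *)

theory Defs
  imports Main
begin

definition biadditive :: "('a::ab_group_add \<Rightarrow> 'a \<Rightarrow> 'a) \<Rightarrow> bool" where
  "biadditive m \<longleftrightarrow> (\<forall>a b c. m (a + b) c = m a c + m b c) \<and> (\<forall>a b c. m a (b + c) = m a b + m a c)"

definition additive_map :: "('a::ab_group_add \<Rightarrow> 'a) \<Rightarrow> bool" where
  "additive_map f \<longleftrightarrow> (\<forall>a b. f (a + b) = f a + f b)"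

definition hom_assoc :: "('a \<Rightarrow> 'a \<Rightarrow> 'a) \<Rightarrow> ('a \<Rightarrow> 'a) \<Rightarrow> bool" where
  "hom_assoc m \<alpha> \<longleftrightarrow> (\<forall>a b c. m (\<alpha> a) (m b c) = m (m a b) (\<alpha> c))"

definition hom_assoc_ring :: "('a::ab_group_add \<Rightarrow> 'a \<Rightarrow> 'a) \<Rightarrow> ('a \<Rightarrow> 'a) \<Rightarrow> bool" where
  "hom_assoc_ring m \<alpha> \<longleftrightarrow> biadditive m \<and> additive_map \<alpha> \<and> hom_assoc m \<alpha>"

definition left_R_additive :: "('a::ab_group_add \<Rightarrow> 'a \<Rightarrow> 'a) \<Rightarrow> ('a \<Rightarrow> 'a) \<Rightarrow> bool" where
  "left_R_additive m \<beta> \<longleftrightarrow> (\<forall>r s t. m r (\<beta> (s + t)) = m r (\<beta> s + \<beta> t))"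

definition word_comp :: "('a \<Rightarrow> 'a) \<Rightarrow> ('a \<Rightarrow> 'a) \<Rightarrow> bool list \<Rightarrow> 'a \<Rightarrow> 'a" where
  "word_comp \<sigma> \<delta> w = foldr (\<lambda>b f. (if b then \<sigma> else \<delta>) \<circ> f) w id"

text \<open>pi i m: sum of all compositions of i copies of \<sigma> and m - i copies of \<delta>
  (zero if i > m; the identity for i = m = 0).\<close>
definition ore_pi :: "('a::ab_group_add \<Rightarrow> 'a) \<Rightarrow> ('a \<Rightarrow> 'a) \<Rightarrow> nat \<Rightarrow> nat \<Rightarrow> 'a \<Rightarrow> 'a" where
  "ore_pi \<sigma> \<delta> i m x =
     (\<Sum>w\<in>{w. length w = m \<and> length (filter id w) = i}. word_comp \<sigma> \<delta> w x)"

text \<open>Elements of R[X;\<sigma>,\<delta>] are represented by coefficient functions nat \<Rightarrow> 'a with finite support.\<close>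
definition supp :: "(nat \<Rightarrow> 'a::zero) \<Rightarrow> nat set" where
  "supp p = {i. p i \<noteq> 0}"

definition is_ore_poly :: "(nat \<Rightarrow> 'a::zero) \<Rightarrow> bool" where
  "is_ore_poly p \<longleftrightarrow> finite (supp p)"

text \<open>Multiplication: the distributive extension of
  aX^m \<cdot> bX^n = \<Sum>_i (a \<cdot> pi_i^m(b)) X^(i+n).\<close>
definition ore_mult :: "('a::ab_group_add \<Rightarrow> 'a \<Rightarrow> 'a) \<Rightarrow> ('a \<Rightarrow> 'a) \<Rightarrow> ('a \<Rightarrow> 'a)
    \<Rightarrow> (nat \<Rightarrow> 'a) \<Rightarrow> (nat \<Rightarrow> 'a) \<Rightarrow> nat \<Rightarrow> 'a" where
  "ore_mult m \<sigma> \<delta> p q k =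
     (\<Sum>i\<in>supp p. \<Sum>j\<in>supp q.
        if j \<le> k then m (p i) (ore_pi \<sigma> \<delta> (k - j) i (q j)) else 0)"

definition ore_alpha :: "('a \<Rightarrow> 'a) \<Rightarrow> (nat \<Rightarrow> 'a) \<Rightarrow> nat \<Rightarrow> 'a" where
  "ore_alpha \<alpha> p = (\<lambda>i. \<alpha> (p i))"

definition ore_hom_assoc :: "('a::ab_group_add \<Rightarrow> 'a \<Rightarrow> 'a) \<Rightarrow> ('a \<Rightarrow> 'a) \<Rightarrow> ('a \<Rightarrow> 'a) \<Rightarrow> ('a \<Rightarrow> 'a) \<Rightarrow> bool" where
  "ore_hom_assoc m \<alpha> \<sigma> \<delta> \<longleftrightarrow>
     (\<forall>p q r. is_ore_poly p \<longrightarrow> is_ore_poly q \<longrightarrow> is_ore_poly r \<longrightarrow>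
        ore_mult m \<sigma> \<delta> (ore_alpha \<alpha> p) (ore_mult m \<sigma> \<delta> q r)
        = ore_mult m \<sigma> \<delta> (ore_mult m \<sigma> \<delta> p q) (ore_alpha \<alpha> r))"

end

theory Submission
  imports Defs
begin

text \<open>Restricting hom-associativity of \<open>R[X;\<sigma>,\<delta>]\<close> to the triples \<open>(a, bX, c)\<close> and
  \<open>(aX, b, c)\<close> and comparing the coefficients of \<open>X\<^sup>0\<close> and \<open>X\<^sup>1\<close> gives
  \<open>\<alpha>(a)(b\<delta>(c)) = (ab)\<delta>(\<alpha>(c))\<close>, \<open>\<alpha>(a)(b\<sigma>(c)) = (ab)\<sigma>(\<alpha>(c))\<close> and expressions for
  \<open>\<alpha>(a)\<delta>(bc)\<close>, \<open>\<alpha>(a)\<sigma>(bc)\<close>; hom-associativity of \<open>R\<close> turns these into the four identities.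
  Only products of polynomials of degree at most one occur, and these are computed
  explicitly; left \<open>R\<close>-additivity is what makes \<open>r\<sigma>(0) = r\<delta>(0) = 0\<close>.\<close>

lemma biadditive_zero_left: "biadditive m \<Longrightarrow> m 0 x = 0"
  unfolding biadditive_def by (metis add_cancel_right_right add_0)

lemma biadditive_zero_right: "biadditive m \<Longrightarrow> m x 0 = 0"
  unfolding biadditive_def by (metis add_cancel_right_right add_0)

lemma biadditive_add_right: "biadditive m \<Longrightarrow> m x (y + z) = m x y + m x z"
  unfolding biadditive_def by blast

lemma left_R_additive_zero:
  "left_R_additive m \<beta> \<Longrightarrow> biadditive m \<Longrightarrow> m r (\<beta> 0) = 0"
  unfolding left_R_additive_def biadditive_def by (metis add_0 add_cancel_right_right)

lemma additive_map_zero: "additive_map f \<Longrightarrow> f 0 = 0"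
  unfolding additive_map_def by (metis add_0 add_cancel_right_right)

lemma ore_pi_0: "ore_pi \<sigma> \<delta> i 0 x = (if i = 0 then x else 0)"
proof -
  have "{w::bool list. length w = 0 \<and> length (filter id w) = i} = (if i = 0 then {[]} else {})"
    by auto
  then show ?thesis by (simp add: ore_pi_def word_comp_def)
qed

lemma ore_pi_1: "ore_pi \<sigma> \<delta> i (Suc 0) x = (if i = 0 then \<delta> x else if i = 1 then \<sigma> x else 0)"
proof -
  have "{w::bool list. length w = Suc 0 \<and> length (filter id w) = i} =
      (if i = 0 then {[False]} else if i = 1 then {[True]} else {})"
    by (auto simp: length_Suc_conv split: if_splits)
  then show ?thesis by (simp add: ore_pi_def word_comp_def)
qed

definition ore_lin :: "'a::zero \<Rightarrow> 'a \<Rightarrow> nat \<Rightarrow> 'a" where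
  "ore_lin a\<^sub>0 a\<^sub>1 = (\<lambda>i. if i = 0 then a\<^sub>0 else if i = 1 then a\<^sub>1 else 0)"

lemma ore_lin_apply: "ore_lin a\<^sub>0 a\<^sub>1 i = (if i = 0 then a\<^sub>0 else if i = 1 then a\<^sub>1 else 0)"
  by (simp add: ore_lin_def)

lemma supp_ore_lin: "supp (ore_lin a\<^sub>0 a\<^sub>1) \<subseteq> {0, 1}"
  by (auto simp: supp_def ore_lin_def split: if_splits)

lemma is_ore_poly_ore_lin: "is_ore_poly (ore_lin a\<^sub>0 a\<^sub>1)"
  unfolding is_ore_poly_def using supp_ore_lin finite_subset by blast

lemma ore_alpha_ore_lin:
  "additive_map \<alpha> \<Longrightarrow> ore_alpha \<alpha> (ore_lin a\<^sub>0 a\<^sub>1) = ore_lin (\<alpha> a\<^sub>0) (\<alpha> a\<^sub>1)"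
  by (auto simp: ore_alpha_def ore_lin_def additive_map_zero)

lemma ore_mult_deg_le_one:
  assumes m: "biadditive m" and \<sigma>: "left_R_additive m \<sigma>" and \<delta>: "left_R_additive m \<delta>"
    and p: "supp p \<subseteq> {0, 1}" and q: "supp q \<subseteq> {0, 1}"
  shows "ore_mult m \<sigma> \<delta> p q k =
    (\<Sum>i\<in>{0, 1}. \<Sum>j\<in>{0, 1}. if j \<le> k then m (p i) (ore_pi \<sigma> \<delta> (k - j) i (q j)) else 0)"
proof -
  let ?t = "\<lambda>i j. if j \<le> k then m (p i) (ore_pi \<sigma> \<delta> (k - j) i (q j)) else 0"
  have vanish: "m (p i) (ore_pi \<sigma> \<delta> n i (q j)) = 0"
    if "i \<in> {0, 1}" "i \<notin> supp p \<or> j \<notin> supp q" for i j n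
    using that biadditive_zero_left[OF m] biadditive_zero_right[OF m]
      left_R_additive_zero[OF \<sigma> m] left_R_additive_zero[OF \<delta> m]
    by (auto simp: supp_def ore_pi_0 ore_pi_1)
  have "ore_mult m \<sigma> \<delta> p q k = (\<Sum>i\<in>supp p. \<Sum>j\<in>{0, 1}. ?t i j)"
    unfolding ore_mult_def using p q
    by (intro sum.cong[OF refl] sum.mono_neutral_left) (auto intro!: vanish)
  also have "\<dots> = (\<Sum>i\<in>{0, 1}. \<Sum>j\<in>{0, 1}. ?t i j)"
    using p by (intro sum.mono_neutral_left) (auto simp: vanish)
  finally show ?thesis .
qed

lemma ore_mult_ore_lin:
  assumes "biadditive m" "left_R_additive m \<sigma>" "left_R_additive m \<delta>"
  shows "ore_mult m \<sigma> \<delta> (ore_lin p\<^sub>0 p\<^sub>1) (ore_lin q\<^sub>0 q\<^sub>1) k =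
    (if k = 0 then m p\<^sub>0 q\<^sub>0 + m p\<^sub>1 (\<delta> q\<^sub>0)
     else if k = 1 then m p\<^sub>0 q\<^sub>1 + m p\<^sub>1 (\<sigma> q\<^sub>0) + m p\<^sub>1 (\<delta> q\<^sub>1)
     else if k = 2 then m p\<^sub>1 (\<sigma> q\<^sub>1)
     else 0)"
  unfolding ore_mult_deg_le_one[OF assms supp_ore_lin supp_ore_lin]
  using biadditive_zero_right[OF assms(1)]
  by (auto simp: ore_lin_def ore_pi_0 ore_pi_1 numeral_2_eq_2)

context
  fixes m :: "'a::ab_group_add \<Rightarrow> 'a \<Rightarrow> 'a" and \<alpha> \<sigma> \<delta> :: "'a \<Rightarrow> 'a"
  assumes ring: "hom_assoc_ring m \<alpha>"
    and \<sigma>: "left_R_additive m \<sigma>" and \<delta>: "left_R_additive m \<delta>"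
    and ore: "ore_hom_assoc m \<alpha> \<sigma> \<delta>"
begin

private lemma biadditive: "biadditive m" and additive_\<alpha>: "additive_map \<alpha>"
  using ring by (simp_all add: hom_assoc_ring_def)

private lemmas ore_lin_simps =
  ore_mult_ore_lin[OF biadditive \<sigma> \<delta>] ore_alpha_ore_lin[OF additive_\<alpha>]
  biadditive_zero_left[OF biadditive] biadditive_zero_right[OF biadditive]
  left_R_additive_zero[OF \<sigma> biadditive] left_R_additive_zero[OF \<delta> biadditive]

private lemma ore_hom_assoc_ore_lin:
  "ore_mult m \<sigma> \<delta> (ore_lin (\<alpha> p\<^sub>0) (\<alpha> p\<^sub>1)) (ore_mult m \<sigma> \<delta> (ore_lin q\<^sub>0 q\<^sub>1) (ore_lin r\<^sub>0 r\<^sub>1)) =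
   ore_mult m \<sigma> \<delta> (ore_mult m \<sigma> \<delta> (ore_lin p\<^sub>0 p\<^sub>1) (ore_lin q\<^sub>0 q\<^sub>1)) (ore_lin (\<alpha> r\<^sub>0) (\<alpha> r\<^sub>1))"
  using ore[unfolded ore_hom_assoc_def, rule_format,
      OF is_ore_poly_ore_lin is_ore_poly_ore_lin is_ore_poly_ore_lin]
  by (simp add: ore_alpha_ore_lin[OF additive_\<alpha>])

text \<open>Coefficients of \<open>X\<^sup>0\<close> and \<open>X\<^sup>1\<close> in \<open>\<alpha>(a)(bX \<cdot> c) = (a \<cdot> bX)\<alpha>(c)\<close>.\<close>
lemma ore_hom_assoc_twist_right:
  "m (\<alpha> a) (m b (\<delta> c)) = m (m a b) (\<delta> (\<alpha> c))"
  "m (\<alpha> a) (m b (\<sigma> c)) = m (m a b) (\<sigma> (\<alpha> c))"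
proof -
  have qr: "ore_mult m \<sigma> \<delta> (ore_lin 0 b) (ore_lin c 0) = ore_lin (m b (\<delta> c)) (m b (\<sigma> c))"
    and pq: "ore_mult m \<sigma> \<delta> (ore_lin a 0) (ore_lin 0 b) = ore_lin 0 (m a b)"
    by (rule ext, simp add: ore_lin_simps ore_lin_apply)+
  have "ore_mult m \<sigma> \<delta> (ore_lin (\<alpha> a) (\<alpha> 0)) (ore_lin (m b (\<delta> c)) (m b (\<sigma> c))) =
      ore_mult m \<sigma> \<delta> (ore_lin 0 (m a b)) (ore_lin (\<alpha> c) (\<alpha> 0))"
    using ore_hom_assoc_ore_lin[of a 0 0 b c 0] by (simp only: qr pq)
  from fun_cong[OF this, of 0] fun_cong[OF this, of 1]
  show "m (\<alpha> a) (m b (\<delta> c)) = m (m a b) (\<delta> (\<alpha> c))"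
    and "m (\<alpha> a) (m b (\<sigma> c)) = m (m a b) (\<sigma> (\<alpha> c))"
    by (simp_all add: ore_lin_simps additive_map_zero[OF additive_\<alpha>])
qed

text \<open>Coefficients of \<open>X\<^sup>0\<close> and \<open>X\<^sup>1\<close> in \<open>\<alpha>(aX)(b \<cdot> c) = (aX \<cdot> b)\<alpha>(c)\<close>.\<close>
lemma ore_hom_assoc_twist_left:
  "m (\<alpha> a) (\<delta> (m b c)) = m (m a (\<delta> b)) (\<alpha> c) + m (m a (\<sigma> b)) (\<delta> (\<alpha> c))"
  "m (\<alpha> a) (\<sigma> (m b c)) = m (m a (\<sigma> b)) (\<sigma> (\<alpha> c))"
proof -
  have qr: "ore_mult m \<sigma> \<delta> (ore_lin b 0) (ore_lin c 0) = ore_lin (m b c) 0"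
    and pq: "ore_mult m \<sigma> \<delta> (ore_lin 0 a) (ore_lin b 0) = ore_lin (m a (\<delta> b)) (m a (\<sigma> b))"
    by (rule ext, simp add: ore_lin_simps ore_lin_apply)+
  have "ore_mult m \<sigma> \<delta> (ore_lin (\<alpha> 0) (\<alpha> a)) (ore_lin (m b c) 0) =
      ore_mult m \<sigma> \<delta> (ore_lin (m a (\<delta> b)) (m a (\<sigma> b))) (ore_lin (\<alpha> c) (\<alpha> 0))"
    using ore_hom_assoc_ore_lin[of 0 a b 0 c 0] by (simp only: qr pq)
  from fun_cong[OF this, of 0] fun_cong[OF this, of 1]
  show "m (\<alpha> a) (\<delta> (m b c)) = m (m a (\<delta> b)) (\<alpha> c) + m (m a (\<sigma> b)) (\<delta> (\<alpha> c))"
    and "m (\<alpha> a) (\<sigma> (m b c)) = m (m a (\<sigma> b)) (\<sigma> (\<alpha> c))"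
    by (simp_all add: ore_lin_simps additive_map_zero[OF additive_\<alpha>])
qed

private lemma hom_assoc: "m (\<alpha> x) (m y z) = m (m x y) (\<alpha> z)"
  using ring by (simp add: hom_assoc_ring_def hom_assoc_def)

lemma mult_delta_alpha: "m (m a b) (\<delta> (\<alpha> c)) = m (m a b) (\<alpha> (\<delta> c))"
  using ore_hom_assoc_twist_right(1) hom_assoc by metis

lemma mult_sigma_alpha: "m (m a b) (\<sigma> (\<alpha> c)) = m (m a b) (\<alpha> (\<sigma> c))"
  using ore_hom_assoc_twist_right(2) hom_assoc by metis

lemma alpha_mult_delta_mult: "m (\<alpha> a) (\<delta> (m b c)) = m (\<alpha> a) (m (\<delta> b) c + m (\<sigma> b) (\<delta> c))"
proof -
  have "m (\<alpha> a) (\<delta> (m b c)) = m (m a (\<delta> b)) (\<alpha> c) + m (m a (\<sigma> b)) (\<alpha> (\<delta> c))"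
    using ore_hom_assoc_twist_left(1) mult_delta_alpha by metis
  also have "\<dots> = m (\<alpha> a) (m (\<delta> b) c + m (\<sigma> b) (\<delta> c))"
    by (simp add: hom_assoc biadditive_add_right[OF biadditive])
  finally show ?thesis .
qed

lemma alpha_mult_sigma_mult: "m (\<alpha> a) (\<sigma> (m b c)) = m (\<alpha> a) (m (\<sigma> b) (\<sigma> c))"
  using ore_hom_assoc_twist_left(2) mult_sigma_alpha hom_assoc by metis

end

theorem mainTheorem6:
  fixes m :: "'a::ab_group_add \<Rightarrow> 'a \<Rightarrow> 'a" and \<alpha> \<sigma> \<delta> :: "'a \<Rightarrow> 'a"
  assumes "hom_assoc_ring m \<alpha>"
    and "left_R_additive m \<sigma>" and "left_R_additive m \<delta>"
    and "ore_hom_assoc m \<alpha> \<sigma> \<delta>"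
  shows "\<forall>a b c.
      m (m a b) (\<delta> (\<alpha> c)) = m (m a b) (\<alpha> (\<delta> c)) \<and>
      m (m a b) (\<sigma> (\<alpha> c)) = m (m a b) (\<alpha> (\<sigma> c)) \<and>
      m (\<alpha> a) (\<delta> (m b c)) = m (\<alpha> a) (m (\<delta> b) c + m (\<sigma> b) (\<delta> c)) \<and>
      m (\<alpha> a) (\<sigma> (m b c)) = m (\<alpha> a) (m (\<sigma> b) (\<sigma> c))"
  using mult_delta_alpha[OF assms] mult_sigma_alpha[OF assms]
    alpha_mult_delta_mult[OF assms] alpha_mult_sigma_mult[OF assms]
  by blast

end
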